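(* Let $R_k(n)$ denote the number of distinct languages denoted by regular expressions of ordinary length exactly $n$ over a $k$-letter alphabet. Then $R_1(n) = \Omega(1.3247^n)$ and $R_2(n) = \Omega(2.102374^n)$ as $n \to \infty$.
   Context: A regular expression over a finite alphabet $\Sigma$ is a (syntactically valid) string over $\Sigma \cup \{+, *, (, ), \epsilon, \emptyset\}$ built in the usual way from the constants $\emptyset$, $\epsilon$ and $a \in \Sigma$ using union $+$, concatenation (written by juxtaposition) and Kleene star $*$, with parentheses, under the usual precedence rules (star binds tighter than concatenation, which binds tighter than union); it denotes a regular language in the standard way. The ordinary length of a regular expression is the total number of symbols in it, including parentheses, $\epsilon$, $\emptyset$ and operator symbols, counted with multiplicity (e.g. $(0+10)*(1+\epsilon)$ has ordinary length 12). *)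

theory Defs
  imports Main "HOL-Library.Landau_Symbols"
begin

text \<open>Symbols of regular expressions over the alphabet {0,...,k-1} (letters are Sym a, a < k).\<close>
datatype rsym = Sym nat | PlusS | StarS | LParS | RParS | EpsS | EmptyS

definition conc :: "nat list set \<Rightarrow> nat list set \<Rightarrow> nat list set" where
  "conc A B = {u @ v | u v. u \<in> A \<and> v \<in> B}"

inductive_set kstar :: "nat list set \<Rightarrow> nat list set" for A where
  kstar_Nil: "[] \<in> kstar A"
| kstar_app: "u \<in> A \<Longrightarrow> v \<in> kstar A \<Longrightarrow> u @ v \<in> kstar A"

text \<open>Unambiguous grammar of syntactically valid regular expressions with the usual
precedences (star > concatenation > union), together with their denoted language:
  E ::= T | E + T,   T ::= F | T F,   F ::= A | F*,   A ::= \<emptyset> | \<epsilon> | a | (E).\<close>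
inductive rexE :: "nat \<Rightarrow> rsym list \<Rightarrow> nat list set \<Rightarrow> bool"
  and rexT :: "nat \<Rightarrow> rsym list \<Rightarrow> nat list set \<Rightarrow> bool"
  and rexF :: "nat \<Rightarrow> rsym list \<Rightarrow> nat list set \<Rightarrow> bool"
  and rexA :: "nat \<Rightarrow> rsym list \<Rightarrow> nat list set \<Rightarrow> bool"
  for k :: nat where
  E_T: "rexT k s L \<Longrightarrow> rexE k s L"
| E_plus: "rexE k s L \<Longrightarrow> rexT k t M \<Longrightarrow> rexE k (s @ [PlusS] @ t) (L \<union> M)"
| T_F: "rexF k s L \<Longrightarrow> rexT k s L"
| T_conc: "rexT k s L \<Longrightarrow> rexF k t M \<Longrightarrow> rexT k (s @ t) (conc L M)"
| F_A: "rexA k s L \<Longrightarrow> rexF k s L"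
| F_star: "rexF k s L \<Longrightarrow> rexF k (s @ [StarS]) (kstar L)"
| A_empty: "rexA k [EmptyS] {}"
| A_eps: "rexA k [EpsS] {[]}"
| A_sym: "a < k \<Longrightarrow> rexA k [Sym a] {[a]}"
| A_par: "rexE k s L \<Longrightarrow> rexA k ([LParS] @ s @ [RParS]) L"

definition R :: "nat \<Rightarrow> nat \<Rightarrow> nat" where
  "R k n = card {L. \<exists>s. length s = n \<and> rexE k s L}"

end

theory Submission
  imports Defs
begin

text \<open>Both bounds come from explicit families of regular expressions whose languages are
pairwise distinct. Over one letter, an expression \<open>E\<close> of length \<open>n\<close> yields \<open>Ea\<close> of length
\<open>n + 1\<close> and \<open>(E+\<epsilon>)a\<close> of length \<open>n + 5\<close>; over two letters, \<open>E0\<close>, \<open>E1\<close> of length \<open>n + 1\<close>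
and \<open>E01*\<close> of length \<open>n + 3\<close>. Right quotients by a letter recover \<open>E\<close> from each new
language and tell the constructions apart, so the sizes \<open>c n\<close> of the families of
languages of expressions of length \<open>n + 1\<close> satisfy
\<open>c (n + 5) = c (n + 4) + c n\<close> and \<open>c (n + 3) = 2 c (n + 2) + c n\<close>; they grow like the
largest roots of \<open>x\<^sup>5 = x\<^sup>4 + 1\<close> (the plastic number \<open>1.32471\<dots>\<close>) and
\<open>x\<^sup>3 = 2x\<^sup>2 + 1\<close> (\<open>2.2056\<dots>\<close>).\<close>

section \<open>Finiteness of the set of languages of a given length\<close>

lemma rex_nonempty:
  shows "rexE k s L \<Longrightarrow> s \<noteq> []" and "rexT k s L \<Longrightarrow> s \<noteq> []"
    and "rexF k s L \<Longrightarrow> s \<noteq> []" and "rexA k s L \<Longrightarrow> s \<noteq> []"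
  by (induct rule: rexE_rexT_rexF_rexA.inducts) auto

definition rex_alphabet :: "nat \<Rightarrow> rsym set" where
  "rex_alphabet k = Sym ` {..<k} \<union> {PlusS, StarS, LParS, RParS, EpsS, EmptyS}"

lemma rex_alphabet:
  shows "rexE k s L \<Longrightarrow> set s \<subseteq> rex_alphabet k" and "rexT k s L \<Longrightarrow> set s \<subseteq> rex_alphabet k"
    and "rexF k s L \<Longrightarrow> set s \<subseteq> rex_alphabet k" and "rexA k s L \<Longrightarrow> set s \<subseteq> rex_alphabet k"
  by (induct rule: rexE_rexT_rexF_rexA.inducts) (auto simp: rex_alphabet_def)

lemma rexA_langs_subset:
  "{L. rexA k s L} \<subseteq> {{}, {[]}} \<union> (\<lambda>a. {[a]}) ` {..<k} \<union> {L. rexE k (butlast (tl s)) L}"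
  by (auto elim: rexA.cases)

lemma rexF_langs_subset: "{L. rexF k s L} \<subseteq> {L. rexA k s L} \<union> kstar ` {L. rexF k (butlast s) L}"
  by (auto elim: rexF.cases)

lemma rexT_langs_subset:
  "{L. rexT k s L} \<subseteq> {L. rexF k s L} \<union>
     (\<Union>i\<in>{1..<length s}. case_prod conc ` ({L. rexT k (take i s) L} \<times> {M. rexF k (drop i s) M}))"
proof
  fix L assume "L \<in> {L. rexT k s L}"
  then have "rexT k s L" by simp
  then show "L \<in> {L. rexF k s L} \<union>
     (\<Union>i\<in>{1..<length s}. case_prod conc ` ({L. rexT k (take i s) L} \<times> {M. rexF k (drop i s) M}))"
  proof cases
    case (T_conc s1 L1 t M)
    then have "s1 \<noteq> []" "t \<noteq> []" using rex_nonempty by auto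
    then have "length s1 \<in> {1..<length s}" using T_conc by (cases s1; cases t) auto
    moreover have "(L1, M) \<in> {L. rexT k (take (length s1) s) L} \<times> {M. rexF k (drop (length s1) s) M}"
      using T_conc by simp
    ultimately show ?thesis using T_conc by blast
  qed simp
qed

lemma rexE_langs_subset:
  "{L. rexE k s L} \<subseteq> {L. rexT k s L} \<union>
     (\<Union>i\<in>{..<length s}. case_prod (\<union>) ` ({L. rexE k (take i s) L} \<times> {M. rexT k (drop (Suc i) s) M}))"
proof
  fix L assume "L \<in> {L. rexE k s L}"
  then have "rexE k s L" by simp
  then show "L \<in> {L. rexT k s L} \<union>
     (\<Union>i\<in>{..<length s}. case_prod (\<union>) ` ({L. rexE k (take i s) L} \<times> {M. rexT k (drop (Suc i) s) M}))"
  proof cases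
    case (E_plus s1 L1 t M)
    then have "length s1 \<in> {..<length s}" by simp
    moreover have "(L1, M) \<in> {L. rexE k (take (length s1) s) L} \<times> {M. rexT k (drop (Suc (length s1)) s) M}"
      using E_plus by simp
    ultimately show ?thesis using E_plus by blast
  qed simp
qed

lemma finite_rex_langs:
  "finite {L. rexA k s L} \<and> finite {L. rexF k s L} \<and> finite {L. rexT k s L} \<and> finite {L. rexE k s L}"
proof (induction s rule: length_induct)
  case (1 s)
  then have IH: "\<And>t. length t < length s \<Longrightarrow> finite {L. rexT k t L}"
    "\<And>t. length t < length s \<Longrightarrow> finite {L. rexF k t L}"
    "\<And>t. length t < length s \<Longrightarrow> finite {L. rexE k t L}"
    by blast+
  show ?case
  proof (cases "s = []")
    case True
    then have "{L. rexA k s L} = {}" "{L. rexF k s L} = {}" "{L. rexT k s L} = {}" "{L. rexE k s L} = {}"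
      using rex_nonempty[of k s] by auto
    then show ?thesis by simp
  next
    case False
    have fA: "finite {L. rexA k s L}"
      using IH(3)[of "butlast (tl s)"] False by (intro finite_subset[OF rexA_langs_subset]) auto
    have fF: "finite {L. rexF k s L}"
      using IH(2)[of "butlast s"] False fA by (intro finite_subset[OF rexF_langs_subset]) auto
    have fT: "finite {L. rexT k s L}"
    proof (rule finite_subset[OF rexT_langs_subset], intro finite_UnI fF finite_UN_I)
      fix i assume "i \<in> {1..<length s}"
      then show "finite (case_prod conc ` ({L. rexT k (take i s) L} \<times> {M. rexF k (drop i s) M}))"
        using IH(1)[of "take i s"] IH(2)[of "drop i s"] by auto
    qed simp
    have fE: "finite {L. rexE k s L}"
    proof (rule finite_subset[OF rexE_langs_subset], intro finite_UnI fT finite_UN_I)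
      fix i assume "i \<in> {..<length s}"
      then show "finite (case_prod (\<union>) ` ({L. rexE k (take i s) L} \<times> {M. rexT k (drop (Suc i) s) M}))"
        using IH(3)[of "take i s"] IH(1)[of "drop (Suc i) s"] by auto
    qed simp
    show ?thesis using fA fF fT fE by blast
  qed
qed

lemma finite_langs_of_length: "finite {L. \<exists>s. length s = n \<and> rexE k s L}"
proof (rule finite_subset)
  show "{L. \<exists>s. length s = n \<and> rexE k s L} \<subseteq>
      (\<Union>s\<in>{s. set s \<subseteq> rex_alphabet k \<and> length s = n}. {L. rexE k s L})"
    using rex_alphabet(1) by blast
  have "finite (rex_alphabet k)" by (simp add: rex_alphabet_def)
  then show "finite (\<Union>s\<in>{s. set s \<subseteq> rex_alphabet k \<and> length s = n}. {L. rexE k s L})"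
    using finite_rex_langs by (intro finite_UN_I finite_lists_length_eq) auto
qed

lemma card_le_R:
  assumes "\<And>L. L \<in> X \<Longrightarrow> \<exists>s. length s = n \<and> rexE k s L"
  shows "card X \<le> R k n"
  unfolding R_def using assms by (intro card_mono[OF finite_langs_of_length]) blast

lemma rexF_Sym: "a < k \<Longrightarrow> rexF k [Sym a] {[a]}"
  by (intro F_A A_sym)

lemma rexT_Eps: "rexT k [EpsS] {[]}"
  by (intro T_F F_A A_eps)

section \<open>Right quotients\<close>

definition rquot :: "nat \<Rightarrow> nat list set \<Rightarrow> nat list set" where
  "rquot a L = {w. w @ [a] \<in> L}"

lemma rquot_conc_singleton [simp]: "rquot a (conc L {[b]}) = (if a = b then L else {})"
  by (auto simp: rquot_def conc_def)

lemma inj_on_conc_singleton: "inj_on (\<lambda>L. conc L {[a]}) A"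
  by (intro inj_onI) (metis rquot_conc_singleton)

lemma Nil_notin_conc_singleton [simp]: "[] \<notin> conc L {[a]}"
  by (auto simp: conc_def)

lemma conc_singleton_eq_empty_iff [simp]: "conc L {[a]} = {} \<longleftrightarrow> L = {}"
  by (auto simp: conc_def)

lemma kstar_singleton_subset: "v \<in> kstar {[a]} \<Longrightarrow> set v \<subseteq> {a}"
  by (induction rule: kstar.induct) auto

lemma rquot_conc_kstar_singleton:
  assumes "a \<noteq> b"
  shows "rquot b (conc L (kstar {[a]})) = rquot b L"
proof
  show "rquot b (conc L (kstar {[a]})) \<subseteq> rquot b L"
  proof
    fix w assume "w \<in> rquot b (conc L (kstar {[a]}))"
    then obtain u v where uv: "w @ [b] = u @ v" "u \<in> L" "v \<in> kstar {[a]}"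
      by (auto simp: rquot_def conc_def)
    have "v = []"
    proof (rule ccontr)
      assume "v \<noteq> []"
      then have "b \<in> set v" using uv(1) by (metis last_appendR last_in_set last_snoc)
      then show False using kstar_singleton_subset[OF uv(3)] assms by auto
    qed
    then show "w \<in> rquot b L" using uv by (simp add: rquot_def)
  qed
  show "rquot b L \<subseteq> rquot b (conc L (kstar {[a]}))"
    using kstar_Nil by (force simp: rquot_def conc_def)
qed

lemma subset_rquot_conc_kstar_singleton: "L \<subseteq> rquot a (conc L (kstar {[a]}))"
proof -
  have "[a] \<in> kstar {[a]}" using kstar_app[OF _ kstar_Nil, of "[a]"] by simp
  then show ?thesis by (force simp: rquot_def conc_def)
qed

lemma rquot_conc_singleton_kstar [simp]:
  "a \<noteq> b \<Longrightarrow> rquot b (conc (conc L {[b]}) (kstar {[a]})) = L"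
  by (simp add: rquot_conc_kstar_singleton)

lemma inj_on_conc_singleton_kstar: "a \<noteq> b \<Longrightarrow> inj_on (\<lambda>L. conc (conc L {[b]}) (kstar {[a]})) A"
  by (intro inj_onI) (metis rquot_conc_singleton_kstar)

lemma rquot_conc_kstar_singleton_nonempty: "L \<noteq> {} \<Longrightarrow> rquot a (conc L (kstar {[a]})) \<noteq> {}"
  using subset_rquot_conc_kstar_singleton[of L a] by auto

section \<open>Growth of a linear recurrence\<close>

lemma pow_le_linear_recurrence:
  fixes c :: "nat \<Rightarrow> nat" and b :: real
  assumes pos: "\<And>n. 1 \<le> c n"
    and rec: "\<And>n. m * c (n + d) + c n \<le> c (n + d + 1)"
    and b: "1 \<le> b" "b ^ (d + 1) \<le> m * b ^ d + 1"
  shows "b ^ n \<le> b ^ d * c n"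
proof (induction n rule: less_induct)
  case (less n)
  show ?case
  proof (cases "n \<le> d")
    case True
    have "b ^ n \<le> b ^ d" using True b(1) by (rule power_increasing)
    also have "\<dots> \<le> b ^ d * c n" using pos[of n] b(1) by simp
    finally show ?thesis .
  next
    case False
    then obtain j where n: "n = j + d + 1"
      by (intro that[of "n - d - 1"]) simp
    have ih: "b ^ (j + d) \<le> b ^ d * c (j + d)" "b ^ j \<le> b ^ d * c j"
      using less n by simp_all
    have "real (m * c (j + d) + c j) \<le> real (c n)"
      using rec[of j] n by (simp only: of_nat_le_iff)
    then have step: "m * c (j + d) + c j \<le> real (c n)"
      by simp
    have "b ^ n = b ^ j * b ^ (d + 1)"
      by (simp add: n power_add)
    also have "\<dots> \<le> b ^ j * (m * b ^ d + 1)"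
      using b by (intro mult_left_mono) auto
    also have "\<dots> = m * b ^ (j + d) + b ^ j"
      by (simp add: algebra_simps power_add)
    also have "\<dots> \<le> m * (b ^ d * c (j + d)) + b ^ d * c j"
      using ih by (intro add_mono mult_left_mono) simp_all
    also have "\<dots> = b ^ d * (m * c (j + d) + c j)"
      by (simp add: algebra_simps)
    also have "\<dots> \<le> b ^ d * c n"
      using step b(1) by (intro mult_left_mono) simp_all
    finally show ?thesis .
  qed
qed

lemma bigomega_powI:
  fixes f :: "nat \<Rightarrow> real" and b c :: real
  assumes "0 < b" "0 < c" "\<And>n. b ^ n \<le> c * f (Suc n)"
  shows "f \<in> \<Omega>(\<lambda>n. b ^ n)"
proof (rule landau_omega.bigI[of "1 / (c * b)"])
  show "0 < 1 / (c * b)" using assms by simp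
  show "\<forall>\<^sub>F n in at_top. norm (f n) \<ge> 1 / (c * b) * norm (b ^ n)"
  proof (rule eventually_mono[OF eventually_gt_at_top[of 0]])
    fix n :: nat assume "0 < n"
    then obtain m where m: "n = Suc m" using gr0_implies_Suc by blast
    have "1 / (c * b) * norm (b ^ n) = b ^ m / c" using assms m by (simp add: field_simps)
    also have "\<dots> \<le> f n" using assms(2) assms(3)[of m] m by (simp add: field_simps)
    finally show "norm (f n) \<ge> 1 / (c * b) * norm (b ^ n)" by simp
  qed
qed

section \<open>One letter\<close>

fun unary_langs :: "nat \<Rightarrow> nat list set set" where
  "unary_langs 0 = {{[0]}}"
| "unary_langs (Suc n) = (\<lambda>L. conc L {[0]}) ` unary_langs n \<union>
    (if 4 \<le> n then (\<lambda>L. conc (L \<union> {[]}) {[0]}) ` unary_langs (n - 4) else {})"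

lemma unary_langs_rex: "L \<in> unary_langs n \<Longrightarrow> \<exists>s. length s = Suc n \<and> rexT 1 s L"
proof (induction n arbitrary: L rule: unary_langs.induct)
  case 1
  then show ?case using T_F[OF rexF_Sym, of 0 1] by auto
next
  case (2 n)
  consider L' where "L' \<in> unary_langs n" "L = conc L' {[0]}"
    | L' where "4 \<le> n" "L' \<in> unary_langs (n - 4)" "L = conc (L' \<union> {[]}) {[0]}"
    using "2.prems" by (auto split: if_splits)
  then show ?case
  proof cases
    case 1
    with "2.IH"(1) obtain s where "length s = Suc n" "rexT 1 s L'" by blast
    with 1 show ?thesis using T_conc[OF _ rexF_Sym, of 1 s L' 0]
      by (intro exI[of _ "s @ [Sym 0]"]) auto
  next
    case 2
    with "2.IH"(2) obtain s where s: "length s = Suc (n - 4)" "rexT 1 s L'" by blast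
    have "rexE 1 (s @ [PlusS] @ [EpsS]) (L' \<union> {[]})"
      using E_plus[OF E_T[OF s(2)] rexT_Eps] .
    then have "rexT 1 ([LParS] @ (s @ [PlusS] @ [EpsS]) @ [RParS]) (L' \<union> {[]})"
      by (intro T_F F_A A_par)
    from T_conc[OF this rexF_Sym, of 0] 2 s(1) show ?thesis
      by (intro exI[of _ "[LParS] @ (s @ [PlusS] @ [EpsS]) @ [RParS] @ [Sym 0]"]) auto
  qed
qed

lemma Nil_notin_unary_langs: "L \<in> unary_langs n \<Longrightarrow> [] \<notin> L"
  by (cases n) (auto split: if_splits)

lemma finite_unary_langs: "finite (unary_langs n)"
  by (induction n rule: unary_langs.induct) auto

lemma card_unary_langs_ge_1: "1 \<le> card (unary_langs n)"
proof (induction n)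
  case (Suc n)
  have "card ((\<lambda>L. conc L {[0]}) ` unary_langs n) = card (unary_langs n)"
    by (rule card_image[OF inj_on_conc_singleton])
  moreover have "card ((\<lambda>L. conc L {[0]}) ` unary_langs n) \<le> card (unary_langs (Suc n))"
    by (intro card_mono finite_unary_langs) auto
  ultimately show ?case using Suc by linarith
qed simp

lemma card_unary_langs_rec:
  "card (unary_langs (n + 4)) + card (unary_langs n) = card (unary_langs (n + 4 + 1))"
proof -
  let ?f = "\<lambda>L. conc L {[0]}" and ?g = "\<lambda>L. conc (L \<union> {[]}) {[0]}"
  have "inj_on ?g (unary_langs n)"
  proof (rule inj_onI)
    fix L M assume "L \<in> unary_langs n" "M \<in> unary_langs n" "?g L = ?g M"
    then have "L \<union> {[]} = M \<union> {[]}"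
      by (metis rquot_conc_singleton)
    with \<open>L \<in> unary_langs n\<close> \<open>M \<in> unary_langs n\<close> show "L = M"
      using Nil_notin_unary_langs by blast
  qed
  moreover have "?f ` unary_langs (n + 4) \<inter> ?g ` unary_langs n = {}"
  proof -
    have "L \<noteq> M \<union> {[]}" if "L \<in> unary_langs (n + 4)" for L M
      using Nil_notin_unary_langs[OF that] by blast
    then show ?thesis by (auto dest: arg_cong[where f = "rquot 0"])
  qed
  moreover have "unary_langs (n + 4 + 1) = ?f ` unary_langs (n + 4) \<union> ?g ` unary_langs n"
    using unary_langs.simps(2)[of "n + 4"] by simp
  ultimately show ?thesis
    by (simp add: card_Un_disjoint finite_unary_langs card_image inj_on_conc_singleton
        del: unary_langs.simps)
qed

lemma R1_lower_bound: "1.3247 ^ n \<le> 1.3247 ^ 4 * real (R 1 (Suc n))"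
proof -
  have "(1.3247::real) ^ n \<le> 1.3247 ^ 4 * card (unary_langs n)"
    by (rule pow_le_linear_recurrence[where c = "\<lambda>n. card (unary_langs n)" and m = 1 and d = 4])
      (use card_unary_langs_ge_1 card_unary_langs_rec in \<open>simp_all add: power_divide\<close>)
  also have "card (unary_langs n) \<le> R 1 (Suc n)"
    using unary_langs_rex by (intro card_le_R) (blast intro: E_T)
  finally show ?thesis by simp
qed

section \<open>Two letters\<close>

fun binary_langs :: "nat \<Rightarrow> nat list set set" where
  "binary_langs 0 = {{[0]}}"
| "binary_langs (Suc n) =
    (\<lambda>L. conc L {[0]}) ` binary_langs n \<union> (\<lambda>L. conc L {[1]}) ` binary_langs n \<union>
    (if 2 \<le> n then (\<lambda>L. conc (conc L {[0]}) (kstar {[1]})) ` binary_langs (n - 2) else {})"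

lemma binary_langs_rex: "L \<in> binary_langs n \<Longrightarrow> \<exists>s. length s = Suc n \<and> rexT 2 s L"
proof (induction n arbitrary: L rule: binary_langs.induct)
  case 1
  then show ?case using T_F[OF rexF_Sym, of 0 2] by auto
next
  case (2 n)
  consider a L' where "a \<in> {0, 1}" "L' \<in> binary_langs n" "L = conc L' {[a]}"
    | L' where "2 \<le> n" "L' \<in> binary_langs (n - 2)" "L = conc (conc L' {[0]}) (kstar {[1]})"
    using "2.prems" by (auto split: if_splits)
  then show ?case
  proof cases
    case 1
    with "2.IH"(1) obtain s where "length s = Suc n" "rexT 2 s L'" by blast
    with 1 show ?thesis using T_conc[OF _ rexF_Sym, of 2 s L' a]
      by (intro exI[of _ "s @ [Sym a]"]) auto
  next
    case 2
    with "2.IH"(3) obtain s where s: "length s = Suc (n - 2)" "rexT 2 s L'" by blast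
    have "rexF 2 ([Sym 1] @ [StarS]) (kstar {[1]})"
      by (intro F_star rexF_Sym) simp
    from T_conc[OF T_conc[OF s(2) rexF_Sym] this] 2 s(1) show ?thesis
      by (intro exI[of _ "s @ [Sym 0] @ [Sym 1] @ [StarS]"]) auto
  qed
qed

lemma binary_langs_nonempty: "L \<in> binary_langs n \<Longrightarrow> L \<noteq> {}"
proof (induction n arbitrary: L rule: binary_langs.induct)
  case (2 n)
  consider a L' where "L' \<in> binary_langs n" "L = conc L' {[a]}"
    | L' where "2 \<le> n" "L' \<in> binary_langs (n - 2)" "L = conc (conc L' {[0]}) (kstar {[1]})"
    using "2.prems" by (auto split: if_splits)
  then show ?case
  proof cases
    case 1
    with "2.IH"(1) show ?thesis by simp
  next
    case 2
    then have "rquot 0 L \<noteq> {}" using "2.IH"(3) by simp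
    then show ?thesis by (auto simp: rquot_def)
  qed
qed simp

lemma finite_binary_langs: "finite (binary_langs n)"
  by (induction n rule: binary_langs.induct) auto

lemma card_binary_langs_ge_1: "1 \<le> card (binary_langs n)"
proof (induction n)
  case (Suc n)
  have "card ((\<lambda>L. conc L {[0]}) ` binary_langs n) = card (binary_langs n)"
    by (rule card_image[OF inj_on_conc_singleton])
  moreover have "card ((\<lambda>L. conc L {[0]}) ` binary_langs n) \<le> card (binary_langs (Suc n))"
    by (intro card_mono finite_binary_langs) auto
  ultimately show ?case using Suc by linarith
qed simp

lemma card_binary_langs_rec:
  "2 * card (binary_langs (n + 2)) + card (binary_langs n) = card (binary_langs (n + 2 + 1))"
proof -
  let ?f0 = "\<lambda>L. conc L {[0]}" and ?f1 = "\<lambda>L. conc L {[1]}"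
    and ?g = "\<lambda>L. conc (conc L {[0]}) (kstar {[1]})"
  have "?f0 L \<noteq> ?f1 M" if "L \<in> binary_langs (n + 2)" for L M
    using binary_langs_nonempty[OF that] by (auto dest: arg_cong[of _ _ "rquot 0"])
  moreover have "?f0 L \<noteq> ?g M" if "M \<in> binary_langs n" for L M
    using rquot_conc_kstar_singleton_nonempty[of "conc M {[0]}" 1] binary_langs_nonempty[OF that]
    by (auto dest: arg_cong[of _ _ "rquot 1"])
  moreover have "?f1 L \<noteq> ?g M" if "M \<in> binary_langs n" for L M
  proof
    assume "?f1 L = ?g M"
    then have "rquot 0 (?f1 L) = M" by simp
    with binary_langs_nonempty[OF that] show False by simp
  qed
  ultimately have "?f0 ` binary_langs (n + 2) \<inter> ?f1 ` binary_langs (n + 2) = {}"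
    "(?f0 ` binary_langs (n + 2) \<union> ?f1 ` binary_langs (n + 2)) \<inter> ?g ` binary_langs n = {}"
    by blast+
  moreover have "binary_langs (n + 2 + 1) =
      ?f0 ` binary_langs (n + 2) \<union> ?f1 ` binary_langs (n + 2) \<union> ?g ` binary_langs n"
    using binary_langs.simps(2)[of "n + 2"] by simp
  ultimately show ?thesis
    by (simp add: card_Un_disjoint finite_binary_langs card_image inj_on_conc_singleton
        inj_on_conc_singleton_kstar del: binary_langs.simps)
qed

lemma R2_lower_bound: "2.102374 ^ n \<le> 2.102374 ^ 2 * real (R 2 (Suc n))"
proof -
  have "(2.102374::real) ^ n \<le> 2.102374 ^ 2 * card (binary_langs n)"
    by (rule pow_le_linear_recurrence[where c = "\<lambda>n. card (binary_langs n)" and m = 2 and d = 2])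
      (use card_binary_langs_ge_1 card_binary_langs_rec in \<open>simp_all add: power_divide\<close>)
  also have "card (binary_langs n) \<le> R 2 (Suc n)"
    using binary_langs_rex by (intro card_le_R) (blast intro: E_T)
  finally show ?thesis by simp
qed

theorem mainTheorem1:
  shows "(\<lambda>n. real (R 1 n)) \<in> \<Omega>(\<lambda>n. 1.3247 ^ n) \<and>
         (\<lambda>n. real (R 2 n)) \<in> \<Omega>(\<lambda>n. 2.102374 ^ n)"
  using R1_lower_bound R2_lower_bound by (auto intro!: bigomega_powI)

end
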